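(* The following problem (the compromise min-max regret minimum selection problem) can be solved in polynomial time: given $n\ge1$, $p\in\{0,\dots,n\}$ and $\hat c\in\mathbb{Q}^n_{\ge0}$, with $\mathcal{X}=\{x\in\{0,1\}^n:\sum_i x_i=p\}$ and $\mathcal{U}(\lambda)=\prod_{i=1}^n[(1-\lambda)\hat c_i,(1+\lambda)\hat c_i]$, find $x\in\mathcal{X}$ minimizing \[ val(x)=\int_0^1\max_{c\in\mathcal{U}(\lambda)}\Big(c^tx-\min_{y\in\mathcal{X}}c^ty\Big)\,d\lambda . \]
   Context: The paper uses the uncertainty-size range $\Lambda=[0,1]$ and weight function $w\equiv1$ for the min-max regret compromise problem. *)

theory Defs
  imports "HOL-Analysis.Analysis" "HOL-Library.Log_Nat"
begin

text \<open>Vectors in R^n are modelled as functions nat => real, only indices i < n matter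
  (we require entries with index >= n to be 0 for elements of the sets below).\<close>

definition dotp :: "nat \<Rightarrow> (nat \<Rightarrow> real) \<Rightarrow> (nat \<Rightarrow> real) \<Rightarrow> real" where
  "dotp n c x = (\<Sum>i<n. c i * x i)"

definition feas :: "nat \<Rightarrow> nat \<Rightarrow> (nat \<Rightarrow> real) set" where
  "feas n p = {x. (\<forall>i<n. x i = 0 \<or> x i = 1) \<and> (\<forall>i\<ge>n. x i = 0) \<and> (\<Sum>i<n. x i) = real p}"

definition unc :: "nat \<Rightarrow> (nat \<Rightarrow> real) \<Rightarrow> real \<Rightarrow> (nat \<Rightarrow> real) set" where
  "unc n ch lam = {c. (\<forall>i<n. (1 - lam) * ch i \<le> c i \<and> c i \<le> (1 + lam) * ch i) \<and> (\<forall>i\<ge>n. c i = 0)}"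

text \<open>Max regret of x under U(lambda): max over c in U(lambda) of (c^t x - min over y in X of c^t y).
  The maximum is attained (compact set, continuous function), so it equals the supremum.\<close>
definition max_regret :: "nat \<Rightarrow> nat \<Rightarrow> (nat \<Rightarrow> real) \<Rightarrow> real \<Rightarrow> (nat \<Rightarrow> real) \<Rightarrow> real" where
  "max_regret n p ch lam x =
     (SUP c\<in>unc n ch lam. dotp n c x - Min ((\<lambda>y. dotp n c y) ` feas n p))"

definition compromise_val :: "nat \<Rightarrow> nat \<Rightarrow> (nat \<Rightarrow> real) \<Rightarrow> (nat \<Rightarrow> real) \<Rightarrow> real" where
  "compromise_val n p ch x = integral {0..1} (\<lambda>lam. max_regret n p ch lam x)"

section \<open>A machine model: log-cost RAM (integer registers, indirect addressing)\<close>

definition bitlen :: "int \<Rightarrow> nat" where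
  "bitlen v = floorlog 2 (nat \<bar>v\<bar>) + 1"

type_synonym mem = "nat \<Rightarrow> int"

datatype aexp = N int | Ld aexp | Plus aexp aexp | Minus aexp aexp | Times aexp aexp
  | Div aexp aexp | Mod aexp aexp

text \<open>Evaluation returns the value together with its log-cost (sum of bit lengths of
  all operands, addresses and loaded contents).\<close>
fun aval :: "aexp \<Rightarrow> mem \<Rightarrow> int \<times> nat" where
  "aval (N k) s = (k, bitlen k)"
| "aval (Ld a) s = (case aval a s of (v, c) \<Rightarrow> (s (nat v), c + bitlen v + bitlen (s (nat v))))"
| "aval (Plus a b) s = (case aval a s of (v, c) \<Rightarrow> case aval b s of (w, d) \<Rightarrow>
      (v + w, c + d + bitlen v + bitlen w))"
| "aval (Minus a b) s = (case aval a s of (v, c) \<Rightarrow> case aval b s of (w, d) \<Rightarrow>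
      (v - w, c + d + bitlen v + bitlen w))"
| "aval (Times a b) s = (case aval a s of (v, c) \<Rightarrow> case aval b s of (w, d) \<Rightarrow>
      (v * w, c + d + bitlen v + bitlen w))"
| "aval (Div a b) s = (case aval a s of (v, c) \<Rightarrow> case aval b s of (w, d) \<Rightarrow>
      (v div w, c + d + bitlen v + bitlen w))"
| "aval (Mod a b) s = (case aval a s of (v, c) \<Rightarrow> case aval b s of (w, d) \<Rightarrow>
      (v mod w, c + d + bitlen v + bitlen w))"

datatype bexp = Less aexp aexp | Eq aexp aexp | Neg bexp | Conj bexp bexp

fun bval :: "bexp \<Rightarrow> mem \<Rightarrow> bool \<times> nat" where
  "bval (Less a b) s = (case aval a s of (v, c) \<Rightarrow> case aval b s of (w, d) \<Rightarrow>
      (v < w, c + d + bitlen v + bitlen w))"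
| "bval (Eq a b) s = (case aval a s of (v, c) \<Rightarrow> case aval b s of (w, d) \<Rightarrow>
      (v = w, c + d + bitlen v + bitlen w))"
| "bval (Neg b) s = (case bval b s of (v, c) \<Rightarrow> (\<not> v, c + 1))"
| "bval (Conj a b) s = (case bval a s of (v, c) \<Rightarrow> case bval b s of (w, d) \<Rightarrow>
      (v \<and> w, c + d + 1))"

datatype com = SKIP | Store aexp aexp | Seq com com | If bexp com com | While bexp com

text \<open>Big-step semantics with cost: big_step prog s t s' means prog started in memory s
  terminates in memory s' using t time units.\<close>
inductive big_step :: "com \<Rightarrow> mem \<Rightarrow> nat \<Rightarrow> mem \<Rightarrow> bool" where
  Skip: "big_step SKIP s 1 s"
| Store: "aval a s = (i, c1) \<Longrightarrow> aval b s = (v, c2) \<Longrightarrow>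
          big_step (Store a b) s (c1 + c2 + 1) (s(nat i := v))"
| Seq: "big_step c1 s t1 s2 \<Longrightarrow> big_step c2 s2 t2 s3 \<Longrightarrow> big_step (Seq c1 c2) s (t1 + t2 + 1) s3"
| IfT: "bval b s = (True, c) \<Longrightarrow> big_step c1 s t s' \<Longrightarrow> big_step (If b c1 c2) s (c + t + 1) s'"
| IfF: "bval b s = (False, c) \<Longrightarrow> big_step c2 s t s' \<Longrightarrow> big_step (If b c1 c2) s (c + t + 1) s'"
| WhileF: "bval b s = (False, c) \<Longrightarrow> big_step (While b body) s (c + 1) s"
| WhileT: "bval b s = (True, c) \<Longrightarrow> big_step body s t1 s2 \<Longrightarrow> big_step (While b body) s2 t2 s3 \<Longrightarrow>
           big_step (While b body) s (c + t1 + t2 + 1) s3"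

text \<open>Register 0 holds n, register 1 holds p, registers 2+2i and 3+2i hold numerator and
  (positive) denominator of the reduced fraction ch_i, for i < n; all other registers are 0.\<close>
definition enc :: "nat \<Rightarrow> nat \<Rightarrow> (nat \<Rightarrow> rat) \<Rightarrow> mem" where
  "enc n p ch = (\<lambda>a. if a = 0 then int n else if a = 1 then int p
      else if a < 2 + 2 * n then
        (if even (a - 2) then fst (quotient_of (ch ((a - 2) div 2)))
         else snd (quotient_of (ch ((a - 2) div 2))))
      else 0)"

definition input_size :: "nat \<Rightarrow> nat \<Rightarrow> (nat \<Rightarrow> rat) \<Rightarrow> nat" where
  "input_size n p ch = (\<Sum>a<2 + 2 * n. bitlen (enc n p ch a))"

definition decode_out :: "nat \<Rightarrow> mem \<Rightarrow> (nat \<Rightarrow> real)" where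
  "decode_out n s = (\<lambda>i. if i < n then real_of_int (s i) else 0)"

end

theory Submission
  imports Defs
begin

text \<open>For x in X and scenario c, the regret c^t x - c^t y against a competitor y is
  maximised over U(lambda) by raising the costs of the items of x to (1+lambda) c_i and lowering
  all others to (1-lambda) c_i. The max regret of x is therefore a finite maximum of affine
  functions of lambda, and an exchange argument shows that replacing a selected item by a
  cheaper unselected one decreases it for every lambda in [0,1]. Hence the p cheapest items
  minimise the max regret pointwise, and so also its integral val. Selecting them is easy:
  item i is taken iff fewer than p items precede it in the order by cost (ties broken by
  index), which a RAM computes with O(n^2) comparisons of O(input size)-bit numbers.\<close>

section \<open>Regret of a selection\<close>

text \<open>For 0/1 vectors x and y this is c^t x - c^t y at c = worst_scenario n h lam x.\<close>

definition scenario_regret ::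
    "nat \<Rightarrow> (nat \<Rightarrow> real) \<Rightarrow> real \<Rightarrow> (nat \<Rightarrow> real) \<Rightarrow> (nat \<Rightarrow> real) \<Rightarrow> real" where
  "scenario_regret n h lam x y =
     (\<Sum>i<n. x i * (1 - y i) * (1 + lam) * h i - y i * (1 - x i) * (1 - lam) * h i)"

definition worst_scenario :: "nat \<Rightarrow> (nat \<Rightarrow> real) \<Rightarrow> real \<Rightarrow> (nat \<Rightarrow> real) \<Rightarrow> nat \<Rightarrow> real" where
  "worst_scenario n h lam x =
     (\<lambda>i. if i < n then if x i = 1 then (1 + lam) * h i else (1 - lam) * h i else 0)"

definition worst_regret :: "nat \<Rightarrow> nat \<Rightarrow> (nat \<Rightarrow> real) \<Rightarrow> real \<Rightarrow> (nat \<Rightarrow> real) \<Rightarrow> real" where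
  "worst_regret n p h lam x = Max ((\<lambda>y. scenario_regret n h lam x y) ` feas n p)"

definition selects_cheapest :: "nat \<Rightarrow> (nat \<Rightarrow> real) \<Rightarrow> (nat \<Rightarrow> real) \<Rightarrow> bool" where
  "selects_cheapest n h x \<longleftrightarrow> (\<forall>i<n. \<forall>j<n. x i = 1 \<longrightarrow> x j = 0 \<longrightarrow> h i \<le> h j)"

lemma feas_01: "x \<in> feas n p \<Longrightarrow> i < n \<Longrightarrow> x i = 0 \<or> x i = 1"
  by (simp add: feas_def)

lemma finite_feas: "finite (feas n p)"
proof -
  have "feas n p \<subseteq> (\<lambda>S i. if i \<in> S then 1 else 0) ` Pow {..<n}"
  proof
    fix x assume x: "x \<in> feas n p"
    then have "x = (\<lambda>i. if i \<in> {k. k < n \<and> x k = 1} then 1 else 0)"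
      unfolding feas_def by (auto intro!: ext) (metis not_le)
    then show "x \<in> (\<lambda>S i. if i \<in> S then 1 else 0) ` Pow {..<n}" by blast
  qed
  then show ?thesis by (rule finite_subset) auto
qed

lemma sum_update_two:
  fixes g g' :: "'a \<Rightarrow> real"
  assumes "finite A" "i \<in> A" "j \<in> A" "i \<noteq> j" "\<And>k. k \<noteq> i \<Longrightarrow> k \<noteq> j \<Longrightarrow> g' k = g k"
  shows "sum g' A = sum g A + (g' i - g i) + (g' j - g j)"
proof -
  have split: "sum f A = f i + f j + sum f (A - {i} - {j})" for f :: "'a \<Rightarrow> real"
    using assms(1-4) by (simp add: sum.remove[of A i] sum.remove[of "A - {i}" j])
  have "sum g' (A - {i} - {j}) = sum g (A - {i} - {j})"
    using assms(5) by (intro sum.cong) auto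
  then show ?thesis using split[of g] split[of g'] by simp
qed

lemma feas_swap:
  assumes "x \<in> feas n p" "i < n" "j < n"
  shows "x(i := x j, j := x i) \<in> feas n p"
proof (cases "i = j")
  case False
  let ?x' = "x(i := x j, j := x i)"
  have "(\<Sum>k<n. ?x' k) = (\<Sum>k<n. x k) + (?x' i - x i) + (?x' j - x j)"
    by (rule sum_update_two) (use assms False in auto)
  then have "(\<Sum>k<n. ?x' k) = (\<Sum>k<n. x k)" using False by simp
  then show ?thesis using assms unfolding feas_def by auto
qed (use assms in simp)

lemma dotp_diff_le_scenario_regret:
  assumes "c \<in> unc n h lam" "x \<in> feas n p" "y \<in> feas n p"
  shows "dotp n c x - dotp n c y \<le> scenario_regret n h lam x y"
  unfolding dotp_def scenario_regret_def sum_subtractf[symmetric]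
proof (rule sum_mono)
  fix i assume "i \<in> {..<n}"
  then show "c i * x i - c i * y i
      \<le> x i * (1 - y i) * (1 + lam) * h i - y i * (1 - x i) * (1 - lam) * h i"
    using assms feas_01[of x n p i] feas_01[of y n p i] unfolding unc_def by auto
qed

lemma worst_scenario_in_unc:
  "0 \<le> lam \<Longrightarrow> \<forall>i<n. 0 \<le> h i \<Longrightarrow> worst_scenario n h lam x \<in> unc n h lam"
  unfolding unc_def worst_scenario_def by (auto simp: mult_right_mono)

lemma dotp_diff_worst_scenario:
  assumes "x \<in> feas n p" "y \<in> feas n p"
  shows "dotp n (worst_scenario n h lam x) x - dotp n (worst_scenario n h lam x) y
    = scenario_regret n h lam x y"
  unfolding dotp_def scenario_regret_def sum_subtractf[symmetric]
  by (rule sum.cong) (use assms feas_01 in \<open>auto simp: worst_scenario_def algebra_simps\<close>)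

lemma max_regret_eq_worst_regret:
  assumes "0 \<le> lam" "\<forall>i<n. 0 \<le> h i" "x \<in> feas n p"
  shows "max_regret n p h lam x = worst_regret n p h lam x"
proof -
  let ?regret = "\<lambda>c. dotp n c x - Min ((\<lambda>y. dotp n c y) ` feas n p)"
  have fin: "finite (feas n p)" and ne: "feas n p \<noteq> {}"
    using finite_feas assms(3) by auto
  have min_attained: "\<exists>y\<in>feas n p. Min ((\<lambda>y. dotp n c y) ` feas n p) = dotp n c y" for c
  proof -
    have "Min ((\<lambda>y. dotp n c y) ` feas n p) \<in> (\<lambda>y. dotp n c y) ` feas n p"
      using fin ne by (intro Min_in) auto
    then show ?thesis by auto
  qed
  have le: "?regret c \<le> worst_regret n p h lam x" if "c \<in> unc n h lam" for c
  proof -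
    obtain y where y: "y \<in> feas n p" "Min ((\<lambda>y. dotp n c y) ` feas n p) = dotp n c y"
      using min_attained by blast
    have "scenario_regret n h lam x y \<le> worst_regret n p h lam x"
      unfolding worst_regret_def using fin y(1) by (intro Max_ge) auto
    then show ?thesis using dotp_diff_le_scenario_regret[OF that assms(3) y(1)] y(2) by linarith
  qed
  let ?c = "worst_scenario n h lam x"
  have ge: "worst_regret n p h lam x \<le> ?regret ?c"
  proof -
    obtain y0 where y0: "y0 \<in> feas n p" "Min ((\<lambda>y. dotp n ?c y) ` feas n p) = dotp n ?c y0"
      using min_attained by blast
    have "scenario_regret n h lam x y \<le> ?regret ?c" if "y \<in> feas n p" for y
      using dotp_diff_worst_scenario[OF assms(3) that] y0 that fin
      by (metis Min_le diff_left_mono finite_imageI image_eqI)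
    then show ?thesis unfolding worst_regret_def using fin ne by (simp add: Max_le_iff)
  qed
  have "max_regret n p h lam x = ?regret ?c"
    unfolding max_regret_def
    using worst_scenario_in_unc[OF assms(1,2)] le ge by (intro cSup_eq_maximum) force+
  moreover have "?regret ?c \<le> worst_regret n p h lam x"
    using le worst_scenario_in_unc[OF assms(1,2)] by blast
  ultimately show ?thesis using ge by linarith
qed

text \<open>Exchange argument: moving a selected item i to a cheaper unselected item j cannot
  increase the regret, because every competitor y is matched by y with i and j swapped.\<close>

lemma scenario_regret_exchange_le:
  assumes "i < n" "j < n" "x i = 1" "x j = 0" "h j \<le> h i" "0 \<le> lam" "lam \<le> 1"
    and "y i = 0 \<or> y i = 1" "y j = 0 \<or> y j = 1"
  shows "scenario_regret n h lam (x(i := 0, j := 1)) y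
    \<le> scenario_regret n h lam x (y(i := y j, j := y i))"
proof -
  have "i \<noteq> j" using assms by auto
  let ?term = "\<lambda>x y k. x k * (1 - y k) * (1 + lam) * h k - y k * (1 - x k) * (1 - lam) * h k"
  let ?x' = "x(i := 0, j := 1)" and ?y' = "y(i := y j, j := y i)"
  have "scenario_regret n h lam ?x' y = scenario_regret n h lam x ?y'
      + (?term ?x' y i - ?term x ?y' i) + (?term ?x' y j - ?term x ?y' j)"
    unfolding scenario_regret_def
    by (rule sum_update_two) (use assms(1,2) \<open>i \<noteq> j\<close> in auto)
  moreover have "(?term ?x' y i - ?term x ?y' i) + (?term ?x' y j - ?term x ?y' j)
      = - ((1 - y j) * (1 + lam) * (h i - h j) + y i * (1 - lam) * (h i - h j))"
    using assms(3,4) \<open>i \<noteq> j\<close> by (simp add: algebra_simps)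
  moreover have "0 \<le> (1 - y j) * (1 + lam) * (h i - h j)" "0 \<le> y i * (1 - lam) * (h i - h j)"
    using assms(5-9) by (auto intro!: mult_nonneg_nonneg)
  ultimately show ?thesis by linarith
qed

lemma worst_regret_exchange_le:
  assumes "x \<in> feas n p" "i < n" "j < n" "x i = 1" "x j = 0" "h j \<le> h i" "0 \<le> lam" "lam \<le> 1"
  shows "worst_regret n p h lam (x(i := 0, j := 1)) \<le> worst_regret n p h lam x"
proof -
  have "scenario_regret n h lam (x(i := 0, j := 1)) y \<le> worst_regret n p h lam x"
    if y: "y \<in> feas n p" for y
  proof -
    have "scenario_regret n h lam (x(i := 0, j := 1)) y
        \<le> scenario_regret n h lam x (y(i := y j, j := y i))"
      using scenario_regret_exchange_le assms feas_01[OF y] by blast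
    also have "\<dots> \<le> worst_regret n p h lam x"
      unfolding worst_regret_def using feas_swap[OF y assms(2,3)] finite_feas by (intro Max_ge) auto
    finally show ?thesis .
  qed
  moreover have "feas n p \<noteq> {}" using assms(1) by blast
  ultimately show ?thesis
    unfolding worst_regret_def[of _ _ _ _ "x(i := 0, j := 1)"] using finite_feas by (simp add: Max_le_iff)
qed

lemma feas_card_support: "x \<in> feas n p \<Longrightarrow> card {k. k < n \<and> x k = 1} = p"
proof -
  assume x: "x \<in> feas n p"
  have "(\<Sum>k<n. x k) = (\<Sum>k<n. if x k = 1 then 1 else 0)"
    by (rule sum.cong) (use feas_01[OF x] in auto)
  also have "\<dots> = real (card ({..<n} \<inter> {k. x k = 1}))" by (simp add: sum.If_cases)
  also have "{..<n} \<inter> {k. x k = 1} = {k. k < n \<and> x k = 1}" by auto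
  finally show ?thesis using x unfolding feas_def by simp
qed

lemma feas_eqI:
  assumes x: "x \<in> feas n p" and y: "y \<in> feas n p"
    and "{k. k < n \<and> y k = 1} \<subseteq> {k. k < n \<and> x k = 1}"
  shows "x = y"
proof (rule ext)
  fix k
  have "{k. k < n \<and> y k = 1} = {k. k < n \<and> x k = 1}"
    using assms by (intro card_subset_eq) (auto simp: feas_card_support)
  then show "x k = y k"
  proof (cases "k < n")
    case True
    then have "x k = 1 \<longleftrightarrow> y k = 1" using \<open>{k. k < n \<and> y k = 1} = _\<close> by blast
    then show ?thesis using feas_01[OF x True] feas_01[OF y True] by linarith
  qed (use x y in \<open>simp add: feas_def\<close>)
qed

lemma worst_regret_le_if_selects_cheapest:
  assumes S: "S \<in> feas n p" "selects_cheapest n h S" and "0 \<le> lam" "lam \<le> 1"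
    and "x \<in> feas n p"
  shows "worst_regret n p h lam S \<le> worst_regret n p h lam x"
  using \<open>x \<in> feas n p\<close>
proof (induction "card {k. k < n \<and> x k = 1 \<and> S k = 0}" arbitrary: x rule: less_induct)
  case less
  show ?case
  proof (cases "\<exists>i<n. x i = 1 \<and> S i = 0")
    case False
    then have "{k. k < n \<and> x k = 1} \<subseteq> {k. k < n \<and> S k = 1}"
    proof (intro subsetI, clarify)
      fix k assume "k < n" "x k = 1"
      then show "S k = 1" using False feas_01[OF S(1) \<open>k < n\<close>] by auto
    qed
    then show ?thesis using feas_eqI[OF S(1) less.prems] by simp
  next
    case True
    then obtain i where i: "i < n" "x i = 1" "S i = 0" by blast
    have "\<exists>j<n. S j = 1 \<and> x j = 0"
    proof (rule ccontr)
      assume no_j: "\<not> ?thesis"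
      then have "{k. k < n \<and> S k = 1} \<subseteq> {k. k < n \<and> x k = 1}"
      proof (intro subsetI, clarify)
        fix k assume "k < n" "S k = 1"
        then show "x k = 1" using no_j feas_01[OF less.prems \<open>k < n\<close>] by auto
      qed
      then show False using feas_eqI[OF less.prems S(1)] i by simp
    qed
    then obtain j where j: "j < n" "S j = 1" "x j = 0" by blast
    have "h j \<le> h i" using S(2) i j unfolding selects_cheapest_def by blast
    let ?x' = "x(i := 0, j := 1)"
    have "?x' = x(i := x j, j := x i)" using i j by auto
    then have x': "?x' \<in> feas n p" using feas_swap[OF less.prems i(1) j(1)] by simp
    have "{k. k < n \<and> ?x' k = 1 \<and> S k = 0} \<subset> {k. k < n \<and> x k = 1 \<and> S k = 0}"
      using i j by auto
    then have "card {k. k < n \<and> ?x' k = 1 \<and> S k = 0} < card {k. k < n \<and> x k = 1 \<and> S k = 0}"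
      by (intro psubset_card_mono) auto
    then have "worst_regret n p h lam S \<le> worst_regret n p h lam ?x'"
      using less.hyps[OF _ x'] by blast
    also have "\<dots> \<le> worst_regret n p h lam x"
      using worst_regret_exchange_le[OF less.prems i(1) j(1) i(2) j(3) \<open>h j \<le> h i\<close> assms(3,4)] .
    finally show ?thesis .
  qed
qed

lemma continuous_on_Max:
  assumes "finite F" "F \<noteq> {}" "\<And>y. y \<in> F \<Longrightarrow> continuous_on A (g y)"
  shows "continuous_on A (\<lambda>t. Max ((\<lambda>y. g y t) ` F) :: real)"
  using assms
proof (induction F rule: finite_ne_induct)
  case (insert x F)
  have "(\<lambda>t. Max ((\<lambda>y. g y t) ` insert x F)) = (\<lambda>t. max (g x t) (Max ((\<lambda>y. g y t) ` F)))"
    using insert by (auto intro!: ext Max_insert)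
  then show ?case using insert by (auto intro!: continuous_on_max)
qed simp

lemma compromise_val_le_if_selects_cheapest:
  assumes S: "S \<in> feas n p" "selects_cheapest n h S" and h: "\<forall>i<n. 0 \<le> h i"
    and y: "y \<in> feas n p"
  shows "compromise_val n p h S \<le> compromise_val n p h y"
proof -
  have val_eq: "compromise_val n p h x = integral {0..1} (\<lambda>lam. worst_regret n p h lam x)"
    if "x \<in> feas n p" for x
    unfolding compromise_val_def
    by (rule integral_cong) (use max_regret_eq_worst_regret[OF _ h that] in auto)
  have "continuous_on {0..1} (\<lambda>lam. worst_regret n p h lam x)" for x
    unfolding worst_regret_def using finite_feas S(1)
    by (intro continuous_on_Max) (auto simp: scenario_regret_def intro!: continuous_intros)
  then have "integral {0..1} (\<lambda>lam. worst_regret n p h lam S)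
      \<le> integral {0..1} (\<lambda>lam. worst_regret n p h lam y)"
    using worst_regret_le_if_selects_cheapest[OF S _ _ y]
    by (intro integral_le integrable_continuous_interval) auto
  then show ?thesis using val_eq S(1) y by simp
qed

section \<open>Cost-bounded execution of RAM programs\<close>

definition runs_within :: "com \<Rightarrow> mem \<Rightarrow> nat \<Rightarrow> mem \<Rightarrow> bool" where
  "runs_within c s K s' \<longleftrightarrow> (\<exists>t. big_step c s t s' \<and> t \<le> K)"

fun aexp_fits :: "nat \<Rightarrow> aexp \<Rightarrow> mem \<Rightarrow> bool" where
  "aexp_fits V (N k) s \<longleftrightarrow> bitlen k \<le> V"
| "aexp_fits V (Ld a) s \<longleftrightarrow> aexp_fits V a s \<and> bitlen (fst (aval a s)) \<le> V
     \<and> bitlen (s (nat (fst (aval a s)))) \<le> V"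
| "aexp_fits V (Plus a b) s \<longleftrightarrow> aexp_fits V a s \<and> aexp_fits V b s
     \<and> bitlen (fst (aval a s)) \<le> V \<and> bitlen (fst (aval b s)) \<le> V"
| "aexp_fits V (Minus a b) s \<longleftrightarrow> aexp_fits V a s \<and> aexp_fits V b s
     \<and> bitlen (fst (aval a s)) \<le> V \<and> bitlen (fst (aval b s)) \<le> V"
| "aexp_fits V (Times a b) s \<longleftrightarrow> aexp_fits V a s \<and> aexp_fits V b s
     \<and> bitlen (fst (aval a s)) \<le> V \<and> bitlen (fst (aval b s)) \<le> V"
| "aexp_fits V (Div a b) s \<longleftrightarrow> aexp_fits V a s \<and> aexp_fits V b s
     \<and> bitlen (fst (aval a s)) \<le> V \<and> bitlen (fst (aval b s)) \<le> V"
| "aexp_fits V (Mod a b) s \<longleftrightarrow> aexp_fits V a s \<and> aexp_fits V b s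
     \<and> bitlen (fst (aval a s)) \<le> V \<and> bitlen (fst (aval b s)) \<le> V"

fun aexp_size :: "aexp \<Rightarrow> nat" where
  "aexp_size (N k) = 1"
| "aexp_size (Ld a) = aexp_size a + 2"
| "aexp_size (Plus a b) = aexp_size a + aexp_size b + 2"
| "aexp_size (Minus a b) = aexp_size a + aexp_size b + 2"
| "aexp_size (Times a b) = aexp_size a + aexp_size b + 2"
| "aexp_size (Div a b) = aexp_size a + aexp_size b + 2"
| "aexp_size (Mod a b) = aexp_size a + aexp_size b + 2"

fun bexp_fits :: "nat \<Rightarrow> bexp \<Rightarrow> mem \<Rightarrow> bool" where
  "bexp_fits V (Less a b) s \<longleftrightarrow> aexp_fits V a s \<and> aexp_fits V b s
     \<and> bitlen (fst (aval a s)) \<le> V \<and> bitlen (fst (aval b s)) \<le> V"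
| "bexp_fits V (Eq a b) s \<longleftrightarrow> aexp_fits V a s \<and> aexp_fits V b s
     \<and> bitlen (fst (aval a s)) \<le> V \<and> bitlen (fst (aval b s)) \<le> V"
| "bexp_fits V (Neg b) s \<longleftrightarrow> bexp_fits V b s"
| "bexp_fits V (Conj a b) s \<longleftrightarrow> bexp_fits V a s \<and> bexp_fits V b s"

fun bexp_size :: "bexp \<Rightarrow> nat" where
  "bexp_size (Less a b) = aexp_size a + aexp_size b + 2"
| "bexp_size (Eq a b) = aexp_size a + aexp_size b + 2"
| "bexp_size (Neg b) = bexp_size b + 1"
| "bexp_size (Conj a b) = bexp_size a + bexp_size b + 1"

lemma aval_cost_le: "aexp_fits V a s \<Longrightarrow> snd (aval a s) \<le> aexp_size a * V"
  by (induction a) (auto split: prod.splits simp: algebra_simps)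

lemma bval_cost_le: "bexp_fits V b s \<Longrightarrow> 1 \<le> V \<Longrightarrow> snd (bval b s) \<le> bexp_size b * V"
  by (induction b) (auto split: prod.splits dest!: aval_cost_le simp: algebra_simps)

lemma runs_within_mono: "runs_within c s K s' \<Longrightarrow> K \<le> K' \<Longrightarrow> runs_within c s K' s'"
  unfolding runs_within_def by auto

lemma runs_within_Skip: "1 \<le> K \<Longrightarrow> runs_within SKIP s K s"
  unfolding runs_within_def using big_step.Skip by blast

lemma runs_within_Store:
  assumes "aexp_fits V a s" "aexp_fits V b s" "s' = s(nat (fst (aval a s)) := fst (aval b s))"
    and "1 \<le> V" "(aexp_size a + aexp_size b + 1) * V \<le> K"
  shows "runs_within (Store a b) s K s'"
proof -
  obtain i c1 where a: "aval a s = (i, c1)" by force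
  obtain v c2 where b: "aval b s = (v, c2)" by force
  have "big_step (Store a b) s (c1 + c2 + 1) s'" using big_step.Store[OF a b] assms(3) a b by simp
  moreover have "c1 + c2 + 1 \<le> K"
    using aval_cost_le[OF assms(1)] aval_cost_le[OF assms(2)] a b assms(4,5)
    by (simp add: algebra_simps)
  ultimately show ?thesis unfolding runs_within_def by blast
qed

lemma runs_within_Seq:
  assumes "runs_within c1 s K1 s2" "runs_within c2 s2 K2 s3" "K1 + K2 + 1 \<le> K"
  shows "runs_within (Seq c1 c2) s K s3"
  using assms big_step.Seq unfolding runs_within_def by fastforce

lemma runs_within_IfT:
  assumes "bexp_fits V b s" "fst (bval b s)" "1 \<le> V" "runs_within c1 s Kb s'"
    and "Kb + (bexp_size b + 1) * V \<le> K"
  shows "runs_within (If b c1 c2) s K s'"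
proof -
  obtain c where b: "bval b s = (True, c)" using assms(2) by (cases "bval b s") auto
  obtain t where t: "big_step c1 s t s'" "t \<le> Kb" using assms(4) unfolding runs_within_def by blast
  have "c \<le> bexp_size b * V" using bval_cost_le[OF assms(1,3)] b by simp
  then show ?thesis unfolding runs_within_def using big_step.IfT[OF b t(1)] t(2) assms(3,5)
    by (intro exI[of _ "c + t + 1"]) (auto simp: algebra_simps)
qed

lemma runs_within_IfF:
  assumes "bexp_fits V b s" "\<not> fst (bval b s)" "1 \<le> V" "runs_within c2 s Kb s'"
    and "Kb + (bexp_size b + 1) * V \<le> K"
  shows "runs_within (If b c1 c2) s K s'"
proof -
  obtain c where b: "bval b s = (False, c)" using assms(2) by (cases "bval b s") auto
  obtain t where t: "big_step c2 s t s'" "t \<le> Kb" using assms(4) unfolding runs_within_def by blast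
  have "c \<le> bexp_size b * V" using bval_cost_le[OF assms(1,3)] b by simp
  then show ?thesis unfolding runs_within_def using big_step.IfF[OF b t(1)] t(2) assms(3,5)
    by (intro exI[of _ "c + t + 1"]) (auto simp: algebra_simps)
qed

lemma runs_within_While:
  assumes fits: "\<And>s. P s \<Longrightarrow> bexp_fits V b s"
    and step: "\<And>s. P s \<Longrightarrow> fst (bval b s) \<Longrightarrow> \<exists>s'. runs_within body s K s' \<and> P s' \<and> f s' < f s"
    and exit: "\<And>s. P s \<Longrightarrow> \<not> fst (bval b s) \<Longrightarrow> Q s"
    and V: "1 \<le> V"
  shows "P s \<Longrightarrow> \<exists>s'. runs_within (While b body) s ((f s + 1) * (K + (bexp_size b + 1) * V)) s' \<and> Q s'"
proof (induction "f s" arbitrary: s rule: less_induct)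
  case less
  obtain bv c where bv: "bval b s = (bv, c)" by force
  have c: "c \<le> bexp_size b * V" using bval_cost_le[OF fits[OF less.prems] V] bv by simp
  show ?case
  proof (cases bv)
    case False
    then have "big_step (While b body) s (c + 1) s" using big_step.WhileF bv by simp
    then show ?thesis using exit[OF less.prems] bv False c V unfolding runs_within_def
      by (intro exI[of _ s]) (auto intro!: exI[of _ "c + 1"] simp: algebra_simps)
  next
    case True
    then obtain s' t1 where s': "big_step body s t1 s'" "t1 \<le> K" "P s'" "f s' < f s"
      using step[OF less.prems] bv unfolding runs_within_def by auto
    obtain s'' t2 where s'': "big_step (While b body) s' t2 s''" "Q s''"
        "t2 \<le> (f s' + 1) * (K + (bexp_size b + 1) * V)"
      using less.hyps[OF s'(4) s'(3)] unfolding runs_within_def by blast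
    have "big_step (While b body) s (c + t1 + t2 + 1) s''"
      using big_step.WhileT[of b s c body t1 s' t2 s''] bv True s' s'' by simp
    moreover have "(f s' + 1) * (K + (bexp_size b + 1) * V) \<le> f s * (K + (bexp_size b + 1) * V)"
      using s'(4) by (intro mult_right_mono) auto
    ultimately show ?thesis using s'(2) s''(2,3) c V unfolding runs_within_def
      by (intro exI[of _ s'']) (auto intro!: exI[of _ "c + t1 + t2 + 1"] simp: algebra_simps)
  qed
qed

lemma bitlen_le: "bitlen v \<le> nat \<bar>v\<bar> + 1"
proof -
  have "nat \<bar>v\<bar> < 2 ^ nat \<bar>v\<bar>" by (rule less_exp)
  then have "floorlog 2 (nat \<bar>v\<bar>) \<le> nat \<bar>v\<bar>" by (simp add: floorlog_le_iff)
  then show ?thesis unfolding bitlen_def by simp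
qed

lemma bitlen_mult: "bitlen (a * b) \<le> bitlen a + bitlen b"
proof -
  have bound: "nat \<bar>v\<bar> < 2 ^ floorlog 2 (nat \<bar>v\<bar>)" for v :: int
    using floorlog_le_iff[of 2 "nat \<bar>v\<bar>" "floorlog 2 (nat \<bar>v\<bar>)"] by simp
  have "nat \<bar>a * b\<bar> = nat \<bar>a\<bar> * nat \<bar>b\<bar>" by (simp add: abs_mult nat_mult_distrib)
  also have "\<dots> < 2 ^ floorlog 2 (nat \<bar>a\<bar>) * 2 ^ floorlog 2 (nat \<bar>b\<bar>)"
    using bound[of a] bound[of b] by (intro mult_strict_mono) auto
  also have "\<dots> = 2 ^ (floorlog 2 (nat \<bar>a\<bar>) + floorlog 2 (nat \<bar>b\<bar>))" by (simp add: power_add)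
  finally have "floorlog 2 (nat \<bar>a * b\<bar>) \<le> floorlog 2 (nat \<bar>a\<bar>) + floorlog 2 (nat \<bar>b\<bar>)"
    by (simp add: floorlog_le_iff)
  then show ?thesis unfolding bitlen_def by simp
qed

section \<open>Ranks and the cheapest selection\<close>

definition rank_less :: "(nat \<Rightarrow> rat) \<Rightarrow> nat \<Rightarrow> nat \<Rightarrow> bool" where
  "rank_less ch j i \<longleftrightarrow> ch j < ch i \<or> (ch j = ch i \<and> j < i)"

definition cost_rank :: "nat \<Rightarrow> (nat \<Rightarrow> rat) \<Rightarrow> nat \<Rightarrow> nat" where
  "cost_rank n ch i = card {j. j < n \<and> rank_less ch j i}"

definition selection :: "nat \<Rightarrow> nat \<Rightarrow> (nat \<Rightarrow> rat) \<Rightarrow> nat \<Rightarrow> real" where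
  "selection n p ch = (\<lambda>i. if i < n \<and> cost_rank n ch i < p then 1 else 0)"

lemma rank_less_trans: "rank_less ch a b \<Longrightarrow> rank_less ch b c \<Longrightarrow> rank_less ch a c"
  by (auto simp: rank_less_def)

lemma rank_less_irrefl: "\<not> rank_less ch i i"
  by (simp add: rank_less_def)

lemma rank_less_total: "a \<noteq> b \<Longrightarrow> rank_less ch a b \<or> rank_less ch b a"
  by (auto simp: rank_less_def)

lemma card_less_le: "card {k. k < j \<and> P k} \<le> j"
  using card_mono[of "{..<j}" "{k. k < j \<and> P k}"] by auto

lemma card_less_Suc: "card {k. k < Suc j \<and> P k} = card {k. k < j \<and> P k} + (if P j then 1 else 0)"
proof -
  have "{k. k < Suc j \<and> P k} = (if P j then insert j {k. k < j \<and> P k} else {k. k < j \<and> P k})"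
    by (auto simp: less_Suc_eq)
  then show ?thesis by simp
qed

lemma rank_strict_mono: "rank_less ch i j \<Longrightarrow> i < n \<Longrightarrow> cost_rank n ch i < cost_rank n ch j"
  unfolding cost_rank_def
proof (rule psubset_card_mono)
  assume "rank_less ch i j" "i < n"
  then show "{k. k < n \<and> rank_less ch k i} \<subset> {k. k < n \<and> rank_less ch k j}"
    using rank_less_trans rank_less_irrefl by blast
qed simp

lemma cost_rank_lt: "i < n \<Longrightarrow> cost_rank n ch i < n"
proof -
  assume "i < n"
  have "cost_rank n ch i \<le> card ({..<n} - {i})"
    unfolding cost_rank_def by (rule card_mono) (auto simp: rank_less_irrefl)
  then show ?thesis using \<open>i < n\<close> by simp
qed

lemma inj_on_cost_rank: "inj_on (cost_rank n ch) {..<n}"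
proof (rule inj_onI)
  fix a b assume "a \<in> {..<n}" "b \<in> {..<n}" "cost_rank n ch a = cost_rank n ch b"
  then show "a = b" using rank_less_total rank_strict_mono by (metis lessThan_iff less_irrefl)
qed

lemma cost_rank_image: "cost_rank n ch ` {..<n} = {..<n}"
  using inj_on_cost_rank cost_rank_lt by (intro card_subset_eq) (auto simp: card_image)

lemma card_rank_less: "p \<le> n \<Longrightarrow> card {i. i < n \<and> cost_rank n ch i < p} = p"
proof -
  assume "p \<le> n"
  have "cost_rank n ch ` {i. i < n \<and> cost_rank n ch i < p} = {k \<in> cost_rank n ch ` {..<n}. k < p}" by auto
  also have "\<dots> = {..<p}" using cost_rank_image \<open>p \<le> n\<close> by auto
  moreover have "inj_on (cost_rank n ch) {i. i < n \<and> cost_rank n ch i < p}"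
    by (rule inj_on_subset[OF inj_on_cost_rank]) auto
  ultimately show ?thesis using card_image by fastforce
qed

lemma selection_in_feas: "p \<le> n \<Longrightarrow> selection n p ch \<in> feas n p"
proof -
  assume "p \<le> n"
  have "(\<Sum>i<n. selection n p ch i) = real (card ({..<n} \<inter> {i. cost_rank n ch i < p}))"
    by (simp add: selection_def sum.If_cases)
  also have "{..<n} \<inter> {i. cost_rank n ch i < p} = {i. i < n \<and> cost_rank n ch i < p}" by auto
  finally show ?thesis
    using card_rank_less[OF \<open>p \<le> n\<close>] unfolding feas_def by (auto simp: selection_def)
qed

lemma selection_selects_cheapest:
  "selects_cheapest n (\<lambda>i. real_of_rat (ch i)) (selection n p ch)"
  unfolding selects_cheapest_def
proof (intro allI impI)
  fix i j assume "i < n" "j < n" "selection n p ch i = 1" "selection n p ch j = 0"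
  then have "cost_rank n ch i < p" "\<not> cost_rank n ch j < p" by (auto simp: selection_def split: if_splits)
  then have "\<not> rank_less ch j i" using rank_strict_mono[OF _ \<open>j < n\<close>] by fastforce
  then show "real_of_rat (ch i) \<le> real_of_rat (ch j)" by (auto simp: rank_less_def of_rat_less_eq)
qed

section \<open>The selection program\<close>

abbreviation "numer ch k \<equiv> fst (quotient_of (ch k))"
abbreviation "denom ch k \<equiv> snd (quotient_of (ch k))"

lemma rank_less_iff_cross_mult:
  "rank_less ch j i \<longleftrightarrow> numer ch j * denom ch i < numer ch i * denom ch j
     \<or> (numer ch j * denom ch i = numer ch i * denom ch j \<and> j < i)"
proof -
  have less: "ch j < ch i \<longleftrightarrow> numer ch j * denom ch i < numer ch i * denom ch j"
    by (simp add: rat_less_code split: prod.splits) (simp add: mult.commute)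
  have "ch j \<le> ch i \<longleftrightarrow> numer ch j * denom ch i \<le> numer ch i * denom ch j"
    "ch i \<le> ch j \<longleftrightarrow> numer ch i * denom ch j \<le> numer ch j * denom ch i"
    by (simp_all add: rat_less_eq_code split: prod.splits) (simp_all add: mult.commute)
  then have "ch j = ch i \<longleftrightarrow> numer ch j * denom ch i = numer ch i * denom ch j" by auto
  with less show ?thesis unfolding rank_less_def by blast
qed

text \<open>The program stores i, j, r in registers 2n+2, 2n+3, 2n+4 and the mark of item k in
  register 2n+5+k. For every i it counts the rank r of i among all items (ordered by cost, ties
  broken by index, comparing fractions by cross-multiplication) and marks i iff r < p. Then the
  marks are copied into registers n-1, ..., 0; register 1 serves as counter and register 0,
  which holds n and is needed for addressing, is overwritten last.\<close>

abbreviation "reg_n \<equiv> Ld (N 0)"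
abbreviation "work_base \<equiv> Plus (Times (N 2) reg_n) (N 2)"
abbreviation "reg_i \<equiv> Ld work_base"
abbreviation "reg_j \<equiv> Ld (Plus work_base (N 1))"
abbreviation "reg_r \<equiv> Ld (Plus work_base (N 2))"
abbreviation "numer_of e \<equiv> Ld (Plus (Times (N 2) e) (N 2))"
abbreviation "denom_of e \<equiv> Ld (Plus (Times (N 2) e) (N 3))"
abbreviation "cross_ji \<equiv> Times (numer_of reg_j) (denom_of reg_i)"
abbreviation "cross_ij \<equiv> Times (numer_of reg_i) (denom_of reg_j)"
abbreviation "mark_addr e \<equiv> Plus (Plus work_base (N 3)) e"
abbreviation "reg_p \<equiv> Ld (N 1)"
abbreviation "reg_c \<equiv> Ld (N 1)"

definition incr_rank :: com where
  "incr_rank = Store (Plus work_base (N 2)) (Plus reg_r (N 1))"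

definition count_step :: com where
  "count_step = Seq
     (If (Less cross_ji cross_ij) incr_rank
       (If (Conj (Eq cross_ji cross_ij) (Less reg_j reg_i)) incr_rank SKIP))
     (Store (Plus work_base (N 1)) (Plus reg_j (N 1)))"

definition count_loop :: com where
  "count_loop = While (Less reg_j reg_n) count_step"

definition rank_step :: com where
  "rank_step = Seq (Store (Plus work_base (N 1)) (N 0)) (Seq (Store (Plus work_base (N 2)) (N 0))
     (Seq count_loop
       (Seq (If (Less reg_r reg_p) (Store (mark_addr reg_i) (N 1)) (Store (mark_addr reg_i) (N 0)))
         (Store work_base (Plus reg_i (N 1))))))"

definition mark_phase :: com where
  "mark_phase = Seq (Store work_base (N 0)) (While (Less reg_i reg_n) rank_step)"

definition copy_step :: com where
  "copy_step = Seq (Store reg_c (Ld (mark_addr reg_c))) (Store (N 1) (Minus reg_c (N 1)))"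

definition copy_phase :: com where
  "copy_phase = Seq (Store (N 1) (Minus reg_n (N 1))) (Seq (While (Less (N 1) reg_c) copy_step)
     (Seq (Store (N 1) (Ld (mark_addr (N 1)))) (Store (N 0) (Ld (mark_addr (N 0))))))"

definition select_prog :: com where
  "select_prog = Seq mark_phase copy_phase"

definition mark :: "nat \<Rightarrow> nat \<Rightarrow> (nat \<Rightarrow> rat) \<Rightarrow> nat \<Rightarrow> int" where
  "mark n p ch k = (if cost_rank n ch k < p then 1 else 0)"

definition marks_upto :: "nat \<Rightarrow> nat \<Rightarrow> (nat \<Rightarrow> rat) \<Rightarrow> nat \<Rightarrow> nat \<Rightarrow> int" where
  "marks_upto n p ch i = (\<lambda>k. if k < i then mark n p ch k else 0)"

definition rank_mem :: "nat \<Rightarrow> nat \<Rightarrow> (nat \<Rightarrow> rat) \<Rightarrow> nat \<Rightarrow> nat \<Rightarrow> nat \<Rightarrow> (nat \<Rightarrow> int) \<Rightarrow> mem" where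
  "rank_mem n p ch i j r mk = (\<lambda>a. if a = 2 * n + 2 then int i else if a = 2 * n + 3 then int j
     else if a = 2 * n + 4 then int r else if 2 * n + 5 \<le> a then mk (a - (2 * n + 5))
     else enc n p ch a)"

definition copy_mem :: "nat \<Rightarrow> nat \<Rightarrow> (nat \<Rightarrow> rat) \<Rightarrow> nat \<Rightarrow> nat \<Rightarrow> nat \<Rightarrow> mem" where
  "copy_mem n p ch j r k = (\<lambda>a. if a = 1 then int k else if 2 \<le> a \<and> k < a \<and> a < n then mark n p ch a
     else rank_mem n p ch n j r (marks_upto n p ch n) a)"

text \<open>A bound on the bit length of every number the program handles: input entries, products
  of two of them, and addresses and counters below 8n + 20.\<close>

definition word_bound :: "nat \<Rightarrow> nat \<Rightarrow> (nat \<Rightarrow> rat) \<Rightarrow> nat" where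
  "word_bound n p ch = 2 * input_size n p ch + 8 * n + 20"

lemma input_size_ge: "2 + 2 * n \<le> input_size n p ch"
proof -
  have "(\<Sum>a<2 + 2 * n. 1) \<le> input_size n p ch"
    unfolding input_size_def by (rule sum_mono) (simp add: bitlen_def)
  then show ?thesis by simp
qed

lemma bitlen_enc_le_input_size: "a < 2 + 2 * n \<Longrightarrow> bitlen (enc n p ch a) \<le> input_size n p ch"
  unfolding input_size_def by (rule member_le_sum) auto

lemma word_bound_ge_1: "1 \<le> word_bound n p ch"
  by (simp add: word_bound_def)

context
  fixes n p :: nat and ch :: "nat \<Rightarrow> rat"
  assumes n_ge_1: "1 \<le> n" and p_le_n: "p \<le> n"
begin

lemma bitlen_numer_le: "k < n \<Longrightarrow> bitlen (numer ch k) \<le> input_size n p ch"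
  using bitlen_enc_le_input_size[of "2 * k + 2"] by (simp add: enc_def)

lemma bitlen_denom_le: "k < n \<Longrightarrow> bitlen (denom ch k) \<le> input_size n p ch"
  using bitlen_enc_le_input_size[of "2 * k + 3"] by (simp add: enc_def)

lemma bitlen_small_le_word_bound [simp]: "\<bar>v\<bar> \<le> 8 * int n + 19 \<Longrightarrow> bitlen v \<le> word_bound n p ch"
  using bitlen_le[of v] unfolding word_bound_def by linarith

lemma bitlen_cross_le_word_bound [simp]:
  "j < n \<Longrightarrow> i < n \<Longrightarrow> bitlen (numer ch j * denom ch i) \<le> word_bound n p ch"
  using bitlen_mult[of "numer ch j" "denom ch i"] bitlen_numer_le[of j] bitlen_denom_le[of i]
  unfolding word_bound_def by linarith

lemma bitlen_numer_le_word_bound [simp]: "k < n \<Longrightarrow> bitlen (numer ch k) \<le> word_bound n p ch"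
  using bitlen_numer_le[of k] unfolding word_bound_def by linarith

lemma bitlen_denom_le_word_bound [simp]: "k < n \<Longrightarrow> bitlen (denom ch k) \<le> word_bound n p ch"
  using bitlen_denom_le[of k] unfolding word_bound_def by linarith

lemma bitlen_mark_le_word_bound [simp]: "bitlen (mark n p ch k) \<le> word_bound n p ch"
  by (simp add: mark_def)

lemma enc_0 [simp]: "enc n p ch 0 = int n" and enc_1 [simp]: "enc n p ch (Suc 0) = int p"
  by (simp_all add: enc_def)

lemmas rank_mem_simps = nat_add_distrib nat_mult_distrib rank_mem_def enc_def

lemma incr_rank_runs:
  "i < n \<Longrightarrow> j \<le> n \<Longrightarrow> r \<le> n \<Longrightarrow> runs_within incr_rank (rank_mem n p ch i j r mk)
     (100 * word_bound n p ch) (rank_mem n p ch i j (r + 1) mk)"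
  unfolding incr_rank_def
  apply (rule runs_within_Store[where V = "word_bound n p ch"])
      apply (simp_all add: word_bound_ge_1 nat_add_distrib nat_mult_distrib rank_mem_def)
  using word_bound_ge_1 by (auto simp: fun_eq_iff)

lemma count_step_runs:
  assumes "i < n" "j < n" "r \<le> j"
  shows "runs_within count_step (rank_mem n p ch i j r mk) (1000 * word_bound n p ch)
    (rank_mem n p ch i (j + 1) (r + (if rank_less ch j i then 1 else 0)) mk)"
proof -
  let ?V = "word_bound n p ch" and ?s = "rank_mem n p ch i j r mk"
  let ?r = "r + (if rank_less ch j i then 1 else 0)"
  have fits_less: "bexp_fits ?V (Less cross_ji cross_ij) ?s"
    and fits_tie: "bexp_fits ?V (Conj (Eq cross_ji cross_ij) (Less reg_j reg_i)) ?s"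
    using assms by (simp_all add: rank_mem_simps)
  have compare: "runs_within (If (Less cross_ji cross_ij) incr_rank
      (If (Conj (Eq cross_ji cross_ij) (Less reg_j reg_i)) incr_rank SKIP)) ?s (500 * ?V)
      (rank_mem n p ch i j ?r mk)"
  proof (cases "numer ch j * denom ch i < numer ch i * denom ch j")
    case True
    then have "rank_less ch j i" by (simp add: rank_less_iff_cross_mult)
    show ?thesis
      apply (rule runs_within_IfT[OF fits_less _ word_bound_ge_1])
      using True assms apply (simp add: rank_mem_simps)
      using incr_rank_runs[of i j r mk] assms \<open>rank_less ch j i\<close> apply simp
      by simp
  next
    case less: False
    show ?thesis
    proof (cases "numer ch j * denom ch i = numer ch i * denom ch j \<and> j < i")
      case True
      then have "rank_less ch j i" by (simp add: rank_less_iff_cross_mult)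
      show ?thesis
        apply (rule runs_within_IfF[where Kb = "300 * ?V", OF fits_less _ word_bound_ge_1])
        using less assms apply (simp add: rank_mem_simps)
         apply (rule runs_within_IfT[OF fits_tie _ word_bound_ge_1])
        using True assms apply (simp add: rank_mem_simps)
        using incr_rank_runs[of i j r mk] assms \<open>rank_less ch j i\<close> apply simp
        by simp_all
    next
      case False
      then have "\<not> rank_less ch j i" using less by (auto simp: rank_less_iff_cross_mult)
      show ?thesis
        apply (rule runs_within_IfF[where Kb = "300 * ?V", OF fits_less _ word_bound_ge_1])
        using less assms apply (simp add: rank_mem_simps)
         apply (rule runs_within_IfF[OF fits_tie _ word_bound_ge_1])
        using False assms apply (simp add: rank_mem_simps)
        using runs_within_Skip[of ?V ?s] word_bound_ge_1 \<open>\<not> rank_less ch j i\<close> apply simp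
        by simp_all
    qed
  qed
  have advance: "runs_within (Store (Plus work_base (N 1)) (Plus reg_j (N 1))) (rank_mem n p ch i j ?r mk)
      (100 * ?V) (rank_mem n p ch i (j + 1) ?r mk)"
    apply (rule runs_within_Store[where V = ?V])
    using assms apply (simp_all add: word_bound_ge_1 nat_add_distrib nat_mult_distrib rank_mem_def)
    using word_bound_ge_1 by (auto simp: fun_eq_iff)
  show ?thesis unfolding count_step_def
    by (rule runs_within_Seq[OF compare advance]) (use word_bound_ge_1 in simp)
qed

lemma count_loop_runs:
  assumes "i < n"
  shows "runs_within count_loop (rank_mem n p ch i 0 0 mk) ((n + 1) * (1020 * word_bound n p ch))
    (rank_mem n p ch i n (cost_rank n ch i) mk)"
proof -
  let ?V = "word_bound n p ch"
  let ?P = "\<lambda>s. \<exists>j\<le>n. s = rank_mem n p ch i j (card {k. k < j \<and> rank_less ch k i}) mk"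
  let ?f = "\<lambda>s. n - nat (s (2 * n + 3))"
  let ?Q = "\<lambda>s. s = rank_mem n p ch i n (cost_rank n ch i) mk"
  have "\<exists>s'. runs_within (While (Less reg_j reg_n) count_step) (rank_mem n p ch i 0 0 mk)
      ((?f (rank_mem n p ch i 0 0 mk) + 1) * (1000 * ?V + (bexp_size (Less reg_j reg_n) + 1) * ?V)) s'
      \<and> ?Q s'"
  proof (rule runs_within_While[where P = ?P and f = ?f and Q = ?Q])
    fix s assume "?P s"
    then show "bexp_fits ?V (Less reg_j reg_n) s" using assms by (auto simp: rank_mem_simps)
  next
    fix s assume "?P s" and guard: "fst (bval (Less reg_j reg_n) s)"
    then obtain j where j: "j \<le> n" "s = rank_mem n p ch i j (card {k. k < j \<and> rank_less ch k i}) mk"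
      by blast
    then have "j < n" using guard by (auto simp: rank_mem_simps)
    let ?s' = "rank_mem n p ch i (j + 1)
      (card {k. k < j \<and> rank_less ch k i} + (if rank_less ch j i then 1 else 0)) mk"
    have "runs_within count_step s (1000 * ?V) ?s'"
      using count_step_runs[OF assms \<open>j < n\<close> card_less_le] j by simp
    moreover have "?P ?s'" using \<open>j < n\<close> card_less_Suc[of j "\<lambda>k. rank_less ch k i"]
      by (intro exI[of _ "j + 1"]) simp
    moreover have "?f ?s' < ?f s" using j \<open>j < n\<close> by (simp add: rank_mem_def)
    ultimately show "\<exists>s'. runs_within count_step s (1000 * ?V) s' \<and> ?P s' \<and> ?f s' < ?f s" by blast
  next
    fix s assume "?P s" and exit: "\<not> fst (bval (Less reg_j reg_n) s)"
    then obtain j where j: "j \<le> n" "s = rank_mem n p ch i j (card {k. k < j \<and> rank_less ch k i}) mk"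
      by blast
    then have "j = n" using exit assms by (auto simp: rank_mem_simps)
    then show "?Q s" using j by (simp add: cost_rank_def)
  qed (use word_bound_ge_1 in \<open>auto intro: exI[of _ 0]\<close>)
  moreover have "?f (rank_mem n p ch i 0 0 mk) = n" by (simp add: rank_mem_def)
  ultimately show ?thesis unfolding count_loop_def by auto
qed

lemma rank_step_runs:
  assumes "i < n"
  shows "runs_within rank_step (rank_mem n p ch i j r mk)
    ((n + 1) * (1020 * word_bound n p ch) + 2000 * word_bound n p ch)
    (rank_mem n p ch (i + 1) n (cost_rank n ch i) (mk(i := mark n p ch i)))"
proof -
  let ?V = "word_bound n p ch" and ?r = "cost_rank n ch i"
  have reset_j: "runs_within (Store (Plus work_base (N 1)) (N 0)) (rank_mem n p ch i j r mk)
      (100 * ?V) (rank_mem n p ch i 0 r mk)"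
    apply (rule runs_within_Store[where V = ?V])
    using assms apply (simp_all add: word_bound_ge_1 nat_add_distrib nat_mult_distrib rank_mem_def)
    using word_bound_ge_1 by (auto simp: fun_eq_iff)
  have reset_r: "runs_within (Store (Plus work_base (N 2)) (N 0)) (rank_mem n p ch i 0 r mk)
      (100 * ?V) (rank_mem n p ch i 0 0 mk)"
    apply (rule runs_within_Store[where V = ?V])
    using assms apply (simp_all add: word_bound_ge_1 nat_add_distrib nat_mult_distrib rank_mem_def)
    using word_bound_ge_1 by (auto simp: fun_eq_iff)
  have "?r \<le> n" using cost_rank_lt[where ch = ch, OF assms] by simp
  then have fits: "bexp_fits ?V (Less reg_r reg_p) (rank_mem n p ch i n ?r mk)"
    using assms p_le_n by (simp add: rank_mem_simps)
  have set_mark: "runs_within (If (Less reg_r reg_p) (Store (mark_addr reg_i) (N 1))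
      (Store (mark_addr reg_i) (N 0))) (rank_mem n p ch i n ?r mk)
      (200 * ?V) (rank_mem n p ch i n ?r (mk(i := mark n p ch i)))"
  proof (cases "?r < p")
    case True
    show ?thesis
      apply (rule runs_within_IfT[OF fits _ word_bound_ge_1])
      using True assms apply (simp add: rank_mem_simps)
       apply (rule runs_within_Store[where V = ?V])
      using assms apply (simp_all add: word_bound_ge_1 nat_add_distrib nat_mult_distrib rank_mem_def)
      using word_bound_ge_1 True by (auto simp: fun_eq_iff mark_def)
  next
    case False
    show ?thesis
      apply (rule runs_within_IfF[OF fits _ word_bound_ge_1])
      using False assms apply (simp add: rank_mem_simps)
       apply (rule runs_within_Store[where V = ?V])
      using assms apply (simp_all add: word_bound_ge_1 nat_add_distrib nat_mult_distrib rank_mem_def)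
      using word_bound_ge_1 False by (auto simp: fun_eq_iff mark_def)
  qed
  have next_i: "runs_within (Store work_base (Plus reg_i (N 1))) (rank_mem n p ch i n ?r (mk(i := mark n p ch i)))
      (100 * ?V) (rank_mem n p ch (i + 1) n ?r (mk(i := mark n p ch i)))"
    apply (rule runs_within_Store[where V = ?V])
    using assms apply (simp_all add: word_bound_ge_1 nat_add_distrib nat_mult_distrib rank_mem_def)
    using word_bound_ge_1 by (auto simp: fun_eq_iff)
  show ?thesis unfolding rank_step_def
    by (rule runs_within_Seq[OF reset_j runs_within_Seq[OF reset_r runs_within_Seq[OF
        count_loop_runs[OF assms] runs_within_Seq[OF set_mark next_i order.refl]
        order.refl] order.refl]]) (use word_bound_ge_1 in simp)
qed

lemma mark_phase_runs:
  "\<exists>j r. runs_within mark_phase (enc n p ch)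
     ((n + 2) * ((n + 1) * (1020 * word_bound n p ch) + 2100 * word_bound n p ch))
     (rank_mem n p ch n j r (marks_upto n p ch n))"
proof -
  let ?V = "word_bound n p ch" and ?K = "(n + 1) * (1020 * word_bound n p ch) + 2000 * word_bound n p ch"
  let ?s0 = "rank_mem n p ch 0 0 0 (\<lambda>_. 0)"
  have init: "runs_within (Store work_base (N 0)) (enc n p ch) (100 * ?V) ?s0"
    apply (rule runs_within_Store[where V = ?V])
    apply (simp_all add: word_bound_ge_1 nat_add_distrib nat_mult_distrib)
    using word_bound_ge_1 by (auto simp: fun_eq_iff rank_mem_def enc_def)
  let ?P = "\<lambda>s. \<exists>i j r. i \<le> n \<and> s = rank_mem n p ch i j r (marks_upto n p ch i)"
  let ?f = "\<lambda>s. n - nat (s (2 * n + 2))"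
  let ?Q = "\<lambda>s. \<exists>j r. s = rank_mem n p ch n j r (marks_upto n p ch n)"
  have "\<exists>s'. runs_within (While (Less reg_i reg_n) rank_step) ?s0
      ((?f ?s0 + 1) * (?K + (bexp_size (Less reg_i reg_n) + 1) * ?V)) s' \<and> ?Q s'"
  proof (rule runs_within_While[where P = ?P and f = ?f and Q = ?Q])
    fix s assume "?P s"
    then show "bexp_fits ?V (Less reg_i reg_n) s" by (auto simp: rank_mem_simps)
  next
    fix s assume "?P s" and guard: "fst (bval (Less reg_i reg_n) s)"
    then obtain i j r where s: "i \<le> n" "s = rank_mem n p ch i j r (marks_upto n p ch i)" by blast
    then have "i < n" using guard by (auto simp: rank_mem_simps)
    let ?s' = "rank_mem n p ch (i + 1) n (cost_rank n ch i) (marks_upto n p ch (i + 1))"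
    have "(marks_upto n p ch i)(i := mark n p ch i) = marks_upto n p ch (i + 1)"
      by (auto simp: marks_upto_def fun_eq_iff)
    then have "runs_within rank_step s ?K ?s'"
      using rank_step_runs[OF \<open>i < n\<close>, of j r "marks_upto n p ch i"] s by simp
    moreover have "?P ?s'"
      using \<open>i < n\<close> by (intro exI[of _ "i + 1"] exI[of _ n] exI[of _ "cost_rank n ch i"]) auto
    moreover have "?f ?s' < ?f s" using s \<open>i < n\<close> by (simp add: rank_mem_def)
    ultimately show "\<exists>s'. runs_within rank_step s ?K s' \<and> ?P s' \<and> ?f s' < ?f s" by blast
  next
    fix s assume "?P s" and exit: "\<not> fst (bval (Less reg_i reg_n) s)"
    then obtain i j r where s: "i \<le> n" "s = rank_mem n p ch i j r (marks_upto n p ch i)" by blast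
    then have "i = n" using exit by (auto simp: rank_mem_simps)
    then show "?Q s" using s by blast
  next
    have "marks_upto n p ch 0 = (\<lambda>_. 0)" by (simp add: marks_upto_def fun_eq_iff)
    then show "?P ?s0" by (intro exI[of _ 0]) simp
  qed (rule word_bound_ge_1)
  moreover have "?f ?s0 = n" by (simp add: rank_mem_def)
  ultimately obtain s' where
    loop: "runs_within (While (Less reg_i reg_n) rank_step) ?s0 ((n + 1) * (?K + 17 * ?V)) s'" "?Q s'"
    by auto
  have "100 * ?V + (n + 1) * (?K + 17 * ?V) + 1 \<le> (n + 2) * (?K + 100 * ?V)"
    using word_bound_ge_1[of n p ch] by (simp add: algebra_simps)
  then have "runs_within mark_phase (enc n p ch) ((n + 2) * (?K + 100 * ?V)) s'"
    unfolding mark_phase_def by (rule runs_within_Seq[OF init loop(1)])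
  moreover have "?K + 100 * ?V = (n + 1) * (1020 * ?V) + 2100 * ?V" by simp
  ultimately show ?thesis using loop(2) by auto
qed

lemma copy_step_runs:
  assumes "1 < k" "k < n"
  shows "runs_within copy_step (copy_mem n p ch j r k) (200 * word_bound n p ch) (copy_mem n p ch j r (k - 1))"
proof -
  let ?V = "word_bound n p ch"
  have copy: "runs_within (Store reg_c (Ld (mark_addr reg_c))) (copy_mem n p ch j r k) (100 * ?V)
      ((copy_mem n p ch j r k)(k := mark n p ch k))"
    apply (rule runs_within_Store[where V = ?V])
    using assms apply (simp_all add: word_bound_ge_1 nat_add_distrib nat_mult_distrib copy_mem_def
        rank_mem_def marks_upto_def)
    using word_bound_ge_1 by (auto simp: fun_eq_iff copy_mem_def rank_mem_def)
  have count_down: "runs_within (Store (N 1) (Minus reg_c (N 1))) ((copy_mem n p ch j r k)(k := mark n p ch k))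
      (99 * ?V) (copy_mem n p ch j r (k - 1))"
    apply (rule runs_within_Store[where V = ?V])
    using assms apply (simp_all add: word_bound_ge_1 nat_add_distrib nat_mult_distrib copy_mem_def
        rank_mem_def marks_upto_def)
    using word_bound_ge_1 assms by (auto simp: fun_eq_iff copy_mem_def rank_mem_def of_nat_diff)
  show ?thesis unfolding copy_step_def
    by (rule runs_within_Seq[OF copy count_down]) (use word_bound_ge_1 in simp)
qed

lemma copy_phase_runs:
  "\<exists>s'. runs_within copy_phase (rank_mem n p ch n j r (marks_upto n p ch n))
     ((n + 2) * (300 * word_bound n p ch)) s' \<and> (\<forall>a<n. s' a = mark n p ch a)"
proof -
  let ?V = "word_bound n p ch"
  have init: "runs_within (Store (N 1) (Minus reg_n (N 1))) (rank_mem n p ch n j r (marks_upto n p ch n))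
      (100 * ?V) (copy_mem n p ch j r (n - 1))"
    apply (rule runs_within_Store[where V = ?V])
    using n_ge_1 apply (simp_all add: word_bound_ge_1 nat_add_distrib nat_mult_distrib copy_mem_def
        rank_mem_def)
    using word_bound_ge_1 n_ge_1 by (auto simp: fun_eq_iff copy_mem_def rank_mem_def of_nat_diff)
  let ?P = "\<lambda>s. \<exists>k. k < n \<and> (1 \<le> k \<or> n = 1) \<and> s = copy_mem n p ch j r k"
  let ?f = "\<lambda>s. nat (s 1)"
  let ?Q = "\<lambda>s. \<exists>k. k < n \<and> k \<le> 1 \<and> (1 \<le> k \<or> n = 1) \<and> s = copy_mem n p ch j r k"
  have "\<exists>s'. runs_within (While (Less (N 1) reg_c) copy_step) (copy_mem n p ch j r (n - 1))
      ((?f (copy_mem n p ch j r (n - 1)) + 1) * (200 * ?V + (bexp_size (Less (N 1) reg_c) + 1) * ?V)) s'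
      \<and> ?Q s'"
  proof (rule runs_within_While[where P = ?P and f = ?f and Q = ?Q])
    fix s assume "?P s"
    then obtain k where "k < n" "s = copy_mem n p ch j r k" by blast
    then show "bexp_fits ?V (Less (N 1) reg_c) s" by (simp add: copy_mem_def)
  next
    fix s assume "?P s" and guard: "fst (bval (Less (N 1) reg_c) s)"
    then obtain k where k: "k < n" "1 \<le> k \<or> n = 1" "s = copy_mem n p ch j r k" by blast
    then have "1 < k" using guard by (simp add: copy_mem_def)
    have "runs_within copy_step s (200 * ?V) (copy_mem n p ch j r (k - 1))"
      using copy_step_runs[OF \<open>1 < k\<close> k(1)] k(3) by simp
    moreover have "?P (copy_mem n p ch j r (k - 1))" using \<open>1 < k\<close> k by (intro exI[of _ "k - 1"]) auto
    moreover have "?f (copy_mem n p ch j r (k - 1)) < ?f s" using k \<open>1 < k\<close> by (simp add: copy_mem_def)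
    ultimately show "\<exists>s'. runs_within copy_step s (200 * ?V) s' \<and> ?P s' \<and> ?f s' < ?f s" by blast
  next
    fix s assume "?P s" and exit: "\<not> fst (bval (Less (N 1) reg_c) s)"
    then obtain k where k: "k < n" "1 \<le> k \<or> n = 1" "s = copy_mem n p ch j r k" by blast
    then show "?Q s" using exit by (auto simp: copy_mem_def)
  next
    show "?P (copy_mem n p ch j r (n - 1))" using n_ge_1 by (intro exI[of _ "n - 1"]) auto
  qed (rule word_bound_ge_1)
  then obtain s2 where
    loop: "runs_within (While (Less (N 1) reg_c) copy_step) (copy_mem n p ch j r (n - 1))
      ((?f (copy_mem n p ch j r (n - 1)) + 1) * (207 * ?V)) s2" and "?Q s2"
    by auto
  then obtain k where k: "k < n" "k \<le> 1" "1 \<le> k \<or> n = 1" "s2 = copy_mem n p ch j r k" by blast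
  have "?f (copy_mem n p ch j r (n - 1)) \<le> n" by (simp add: copy_mem_def)
  then have "(?f (copy_mem n p ch j r (n - 1)) + 1) * (207 * ?V) \<le> (n + 1) * (207 * ?V)"
    by (intro mult_right_mono) simp_all
  with loop have loop: "runs_within (While (Less (N 1) reg_c) copy_step) (copy_mem n p ch j r (n - 1))
      ((n + 1) * (207 * ?V)) s2"
    by (rule runs_within_mono)
  let ?s3 = "s2(1 := marks_upto n p ch n 1)"
  have copy_1: "runs_within (Store (N 1) (Ld (mark_addr (N 1)))) s2 (100 * ?V) ?s3"
    apply (rule runs_within_Store[where V = ?V])
    using k n_ge_1 apply (simp_all add: word_bound_ge_1 nat_add_distrib nat_mult_distrib copy_mem_def
        rank_mem_def marks_upto_def)
    using word_bound_ge_1 k by (auto simp: fun_eq_iff copy_mem_def rank_mem_def)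
  let ?s4 = "?s3(0 := mark n p ch 0)"
  have copy_0: "runs_within (Store (N 0) (Ld (mark_addr (N 0)))) ?s3 (100 * ?V) ?s4"
    apply (rule runs_within_Store[where V = ?V])
    using k n_ge_1 apply (simp_all add: word_bound_ge_1 nat_add_distrib nat_mult_distrib copy_mem_def
        rank_mem_def marks_upto_def)
    using word_bound_ge_1 k by (auto simp: fun_eq_iff copy_mem_def rank_mem_def)
  have "runs_within copy_phase (rank_mem n p ch n j r (marks_upto n p ch n)) ((n + 2) * (300 * ?V)) ?s4"
    unfolding copy_phase_def
    by (rule runs_within_Seq[OF init runs_within_Seq[OF loop
        runs_within_Seq[OF copy_1 copy_0 order.refl] order.refl]])
      (use word_bound_ge_1[of n p ch] in \<open>simp add: algebra_simps\<close>)
  moreover have "\<forall>a<n. ?s4 a = mark n p ch a" using k by (auto simp: copy_mem_def marks_upto_def)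
  ultimately show ?thesis by blast
qed

lemma select_prog_runs:
  "\<exists>s'. runs_within select_prog (enc n p ch) (100000 * (input_size n p ch + 1) ^ 3) s'
     \<and> decode_out n s' = selection n p ch"
proof -
  let ?V = "word_bound n p ch" and ?X = "input_size n p ch + 1"
  obtain j r where mark: "runs_within mark_phase (enc n p ch)
      ((n + 2) * ((n + 1) * (1020 * ?V) + 2100 * ?V)) (rank_mem n p ch n j r (marks_upto n p ch n))"
    using mark_phase_runs by blast
  obtain s' where copy: "runs_within copy_phase (rank_mem n p ch n j r (marks_upto n p ch n))
      ((n + 2) * (300 * ?V)) s'" and marks: "\<forall>a<n. s' a = mark n p ch a"
    using copy_phase_runs by blast
  have "n + 2 \<le> ?X" and "?V \<le> 26 * ?X"
    using input_size_ge[of n p ch] by (simp_all add: word_bound_def)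
  have "n + 2 \<le> ?X * ?X" and "1 \<le> ?X * ?X"
    using \<open>n + 2 \<le> ?X\<close> le_square[of ?X] by linarith+
  have "(n + 2) * (n + 1) \<le> ?X * ?X" using \<open>n + 2 \<le> ?X\<close> by (intro mult_mono) auto
  then have "(n + 2) * (n + 1) * ?V \<le> ?X * ?X * ?V" by (rule mult_right_mono) simp
  moreover have "(n + 2) * ?V \<le> ?X * ?X * ?V"
    using \<open>n + 2 \<le> ?X * ?X\<close> by (rule mult_right_mono) simp
  moreover have "1 * ?V \<le> ?X * ?X * ?V" using \<open>1 \<le> ?X * ?X\<close> by (rule mult_right_mono) simp
  ultimately have "(n + 2) * ((n + 1) * (1020 * ?V) + 2100 * ?V) + (n + 2) * (300 * ?V) + 1
      \<le> 3421 * (?X * ?X * ?V)"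
    using word_bound_ge_1[of n p ch] by (simp add: algebra_simps)
  also have "\<dots> \<le> 3421 * (?X * ?X * (26 * ?X))"
    using \<open>?V \<le> 26 * ?X\<close> by (intro mult_left_mono) auto
  also have "\<dots> \<le> 100000 * ?X ^ 3"
    using power3_eq_cube[of ?X] by (simp only:)
  finally have "runs_within select_prog (enc n p ch) (100000 * ?X ^ 3) s'"
    unfolding select_prog_def by (rule runs_within_Seq[OF mark copy])
  moreover have "decode_out n s' = selection n p ch"
    using marks by (auto simp: decode_out_def selection_def mark_def fun_eq_iff)
  ultimately show ?thesis by blast
qed

end

theorem corollary1:
  "\<exists>(prog :: com) (C :: nat) (k :: nat).
     \<forall>(n :: nat) (p :: nat) (ch :: nat \<Rightarrow> rat).
       n \<ge> 1 \<longrightarrow> p \<le> n \<longrightarrow> (\<forall>i<n. ch i \<ge> 0) \<longrightarrow>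
       (\<exists>t s'. big_step prog (enc n p ch) t s' \<and>
          t \<le> C * (input_size n p ch + 1) ^ k \<and>
          decode_out n s' \<in> feas n p \<and>
          (\<forall>y\<in>feas n p.
             compromise_val n p (\<lambda>i. real_of_rat (ch i)) (decode_out n s')
               \<le> compromise_val n p (\<lambda>i. real_of_rat (ch i)) y))"
proof (rule exI[of _ select_prog], rule exI[of _ 100000], rule exI[of _ 3], intro allI impI)
  fix n p :: nat and ch :: "nat \<Rightarrow> rat"
  assume "n \<ge> 1" "p \<le> n" "\<forall>i<n. ch i \<ge> 0"
  obtain t s' where run: "big_step select_prog (enc n p ch) t s'"
      "t \<le> 100000 * (input_size n p ch + 1) ^ 3" and out: "decode_out n s' = selection n p ch"
    using select_prog_runs[OF \<open>n \<ge> 1\<close> \<open>p \<le> n\<close>] unfolding runs_within_def by blast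
  have "compromise_val n p (\<lambda>i. real_of_rat (ch i)) (selection n p ch)
      \<le> compromise_val n p (\<lambda>i. real_of_rat (ch i)) y" if "y \<in> feas n p" for y
    using compromise_val_le_if_selects_cheapest[OF selection_in_feas[OF \<open>p \<le> n\<close>]
        selection_selects_cheapest _ that] \<open>\<forall>i<n. ch i \<ge> 0\<close> by simp
  then show "\<exists>t s'. big_step select_prog (enc n p ch) t s' \<and>
      t \<le> 100000 * (input_size n p ch + 1) ^ 3 \<and> decode_out n s' \<in> feas n p \<and>
      (\<forall>y\<in>feas n p. compromise_val n p (\<lambda>i. real_of_rat (ch i)) (decode_out n s')
         \<le> compromise_val n p (\<lambda>i. real_of_rat (ch i)) y)"
    using run selection_in_feas[OF \<open>p \<le> n\<close>] by (intro exI[of _ t] exI[of _ s']) (simp add: out)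
qed

end
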